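(* Let $q$ be an odd prime power, $n\ge 2$, and if $n=2$ assume $q\equiv 1\pmod 4$. Let $M=(m_{ij})$ be an $n\times n$ matrix with entries in $\mathbb{F}_q$ such that $m_{ij}+m_{ji}=0$ for all $i\neq j$, $m_{11}\neq m_{22}$, and $m_{ii}=m_{22}$ for all $i>2$. Then $\sharp(\mathrm{Num}_0(M)_q)=(q+1)/2$ and $\mathrm{Num}_0(M)_q\setminus\{0\}$ is the set of all $a\in\mathbb{F}_q^*$ such that $-a/(m_{22}-m_{11})$ is a square in $\mathbb{F}_q$. Moreover $0\in\mathrm{Num}'_0(M)_q$ if and only if either $n\ge 4$, or $n=3$ and $q\equiv 1\pmod 4$.
   Context: The Hermitian form is $\langle u,v\rangle=\sum_i u_i^qv_i$; for $u=(x_1,\dots,x_n)\in\mathbb{F}_q^n$ and $M=(m_{ij})$ over $\mathbb{F}_q$, $\langle u,u\rangle=\sum x_i^2$ and $\langle u,Mu\rangle=\sum_{i,j}m_{ij}x_ix_j$. $\mathrm{Num}_0(M)_q=\{\langle u,Mu\rangle: u\in\mathbb{F}_q^n,\ \langle u,u\rangle=0\}$ and $\mathrm{Num}'_0(M)_q=\{\langle u,Mu\rangle: u\in\mathbb{F}_q^n\setminus\{0\},\ \langle u,u\rangle=0\}$. *)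

theory Defs
  imports Main "HOL-Library.Cardinality"
begin

text \<open>F_q is a finite field type 'a (q = CARD('a)). Vectors of F_q^n are functions
  nat => 'a vanishing outside {0..<n} (index i of the paper is i-1 here);
  n x n matrices are functions nat => nat => 'a, only entries with indices < n matter.\<close>

definition vecs :: "nat \<Rightarrow> (nat \<Rightarrow> 'a::zero) set" where
  "vecs n = {u. \<forall>i\<ge>n. u i = 0}"

definition herm :: "nat \<Rightarrow> (nat \<Rightarrow> 'a::{field,finite}) \<Rightarrow> (nat \<Rightarrow> 'a) \<Rightarrow> 'a" where
  "herm n u v = (\<Sum>i<n. u i ^ CARD('a) * v i)"

definition mat_vec :: "nat \<Rightarrow> (nat \<Rightarrow> nat \<Rightarrow> 'a::{field,finite}) \<Rightarrow> (nat \<Rightarrow> 'a) \<Rightarrow> (nat \<Rightarrow> 'a)" where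
  "mat_vec n M u = (\<lambda>i. if i < n then (\<Sum>j<n. M i j * u j) else 0)"

definition Num0 :: "nat \<Rightarrow> (nat \<Rightarrow> nat \<Rightarrow> 'a::{field,finite}) \<Rightarrow> 'a set" where
  "Num0 n M = {herm n u (mat_vec n M u) | u. u \<in> vecs n \<and> herm n u u = 0}"

definition Num0' :: "nat \<Rightarrow> (nat \<Rightarrow> nat \<Rightarrow> 'a::{field,finite}) \<Rightarrow> 'a set" where
  "Num0' n M = {herm n u (mat_vec n M u) | u. u \<in> vecs n \<and> u \<noteq> (\<lambda>_. 0) \<and> herm n u u = 0}"

end

theory Submission
  imports Defs "HOL-Library.Z2" "HOL-Library.Disjoint_Sets"
begin

text \<open>Over \<open>\<bbbF>\<^sub>q\<close> we have \<open>x\<^sup>q = x\<close>, so \<open>\<langle>u,u\<rangle> = \<Sum>\<^sub>i x\<^sub>i\<^sup>2\<close>; and since \<open>2 \<noteq> 0\<close>, the skew off-diagonal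
  entries cancel in \<open>\<langle>u,Mu\<rangle>\<close>, leaving \<open>\<langle>u,Mu\<rangle> = (m11 - m22) x\<^sub>1\<^sup>2 + m22 \<langle>u,u\<rangle>\<close>. On the isotropic cone
  the value is thus \<open>(m11 - m22) x\<^sub>1\<^sup>2\<close>, and every \<open>x\<^sub>1\<close> occurs: \<open>-x\<^sub>1\<^sup>2\<close> is a sum of two squares
  (pigeonhole on the \<open>(q+1)/2\<close> squares), and a single square when \<open>n = 2\<close> (\<open>-1\<close> is a square iff
  \<open>q \<equiv> 1 mod 4\<close>). So \<open>Num\<^sub>0(M)\<close> is \<open>m11 - m22\<close> times the set of squares. Likewise \<open>0 \<in> Num'\<^sub>0(M)\<close>
  iff \<open>x\<^sub>2\<^sup>2 + \<dots> + x\<^sub>n\<^sup>2\<close> has a nontrivial zero, i.e. iff \<open>n - 1 \<ge> 3\<close>, or \<open>n - 1 = 2\<close> and \<open>-1\<close> is a square.\<close>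

lemma even_card_if_fixpoint_free_involution:
  assumes "finite X" "\<And>x. x \<in> X \<Longrightarrow> h x \<in> X" "\<And>x. x \<in> X \<Longrightarrow> h (h x) = x"
    and "\<And>x. x \<in> X \<Longrightarrow> h x \<noteq> x"
  shows "even (card X)"
proof -
  \<comment> \<open>Count \<open>X\<close> in \<open>\<int>/2\<close>: each orbit \<open>{x, h x}\<close> contributes \<open>1 + 1 = 0\<close>.\<close>
  have "(\<Sum>x\<in>X. 1::bit) = 0"
    by (rule sum_involution_eq_0[where h = h]) (use assms in auto)
  moreover have "of_nat m = (0::bit) \<longleftrightarrow> even m" for m
    by (induction m) auto
  ultimately show ?thesis by simp
qed

lemma power_card_eq_self:
  fixes x :: "'a::{field,finite}"
  shows "x ^ CARD('a) = x"
proof (cases "x = 0")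
  case False
  have "x * (\<Prod>y\<in>UNIV-{0}. x * y) = x * x ^ (CARD('a) - 1) * \<Prod>(UNIV-{0})"
    by (simp add: prod.distrib mult_ac card_Diff_subset)
  also have "x * x ^ (CARD('a) - 1) = x ^ CARD('a)"
    by (simp flip: power_Suc)
  also have "(\<Prod>y\<in>UNIV-{0}. x * y) = (\<Prod>y\<in>UNIV-{0}. y)"
    by (rule prod.reindex_bij_witness[of _ "\<lambda>y. y / x" "\<lambda>y. x * y"]) (use False in auto)
  finally show ?thesis by simp
qed simp

lemma two_neq_zero_if_odd_card:
  assumes "odd CARD('a::{field,finite})"
  shows "(2::'a) \<noteq> 0"
proof
  assume "(2::'a) = 0"
  then have "x + 1 + 1 = x" for x :: 'a
    by (metis add.assoc add.right_neutral one_add_one)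
  then have "even CARD('a)"
    by (intro even_card_if_fixpoint_free_involution[where h = "\<lambda>x. x + 1"]) auto
  with assms show False by simp
qed

lemma neq_minus_self:
  fixes y :: "'a::field"
  assumes "(2::'a) \<noteq> 0" "y \<noteq> 0"
  shows "y \<noteq> - y"
proof
  assume "y = - y"
  then have "2 * y = 0" by (metis add.right_inverse mult_2)
  with assms show False by simp
qed

lemma card_squares:
  assumes "odd CARD('a::{field,finite})"
  shows "2 * card (range (\<lambda>x::'a. x^2)) = CARD('a) + 1"
proof -
  let ?S = "range (\<lambda>x::'a. x^2)"
  have fibre: "card {x::'a. x^2 = s} = (if s = 0 then 1 else 2)" if "s \<in> ?S" for s
  proof -
    from that obtain y where y: "s = y^2" by auto
    have "{x::'a. x^2 = s} = {y, -y}"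
      using y by (auto simp: power2_eq_iff)
    with y neq_minus_self[OF two_neq_zero_if_odd_card[OF assms], of y] show ?thesis
      by auto
  qed
  have "(\<Union>s\<in>?S. {x. x^2 = s}) = UNIV" by auto
  moreover have "card (\<Union>s\<in>?S. {x. x^2 = s}) = (\<Sum>s\<in>?S. card {x::'a. x^2 = s})"
    by (rule card_UN_disjoint) auto
  ultimately have "CARD('a) = (\<Sum>s\<in>?S. card {x::'a. x^2 = s})" by simp
  also have "\<dots> = (\<Sum>s\<in>?S. if s = 0 then 1 else 2)"
    using fibre by (rule sum.cong[OF refl])
  also have "\<dots> = 1 + 2 * (card ?S - 1)"
    by (simp add: sum.remove[of _ 0] card_Diff_subset image_eqI[of 0 _ 0])
  finally show ?thesis
    using card_gt_0_iff[of ?S] by simp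
qed

lemma exists_sum_two_squares_eq:
  assumes "odd CARD('a::{field,finite})"
  shows "\<exists>x y::'a. x^2 + y^2 = a"
proof -
  let ?S = "range (\<lambda>x::'a. x^2)"
  let ?T = "(\<lambda>s. a - s) ` ?S"
  \<comment> \<open>Pigeonhole: \<open>?S\<close> and \<open>?T\<close> each contain \<open>(q + 1) / 2\<close> of the \<open>q\<close> elements.\<close>
  have "card ?T = card ?S"
    by (rule card_image) (auto simp: inj_on_def)
  moreover have "card ?S + card ?T = card (?S \<union> ?T) + card (?S \<inter> ?T)"
    by (rule card_Un_Int) auto
  moreover have "card (?S \<union> ?T) \<le> CARD('a)"
    by (rule card_mono) auto
  ultimately have "?S \<inter> ?T \<noteq> {}"
    using card_squares[OF assms] by auto
  then obtain x y :: 'a where "x^2 = a - y^2" by auto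
  then show ?thesis by (auto simp: eq_diff_eq)
qed

lemma minus_one_square_iff:
  assumes q: "odd CARD('a::{field,finite})"
  shows "(\<exists>r::'a. r^2 = -1) \<longleftrightarrow> CARD('a) mod 4 = 1"
proof
  assume "\<exists>r::'a. r^2 = -1"
  then obtain r :: 'a where r: "r^2 = -1" by blast
  obtain k where k: "CARD('a) = Suc (2 * k)" using q by (auto elim: oddE)
  have "r \<noteq> 0" using r by auto
  moreover have "r * (r^2)^k = r * 1"
    using power_card_eq_self[of r] by (simp add: k power_mult)
  ultimately have "(-1::'a)^k = 1" using r by simp
  moreover have "(-1::'a) \<noteq> 1"
    using neq_minus_self[OF two_neq_zero_if_odd_card[OF q], of 1] by simp
  ultimately have "even k" by (metis neg_one_odd_power)
  then show "CARD('a) mod 4 = 1" using k by (auto elim!: evenE)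
next
  assume q4: "CARD('a) mod 4 = 1"
  show "\<exists>r::'a. r^2 = -1"
  proof (rule ccontr)
    assume no_root: "\<nexists>r::'a. r^2 = -1"
    let ?P = "range (\<lambda>x::'a. x^2) - {0}"
    have "0 \<in> range (\<lambda>x::'a. x^2)" "1 \<in> ?P" by (auto intro: image_eqI[of _ _ 0] image_eqI[of _ _ 1])
    then have "2 * card ?P = CARD('a) - 1"
      using card_squares[OF q] by (simp add: card_Diff_subset)
    with q4 have "even (card ?P)" by presburger
    \<comment> \<open>Inversion pairs up the nonzero squares other than \<open>1\<close>, since \<open>-1\<close> is not one of them.\<close>
    moreover have "even (card (?P - {1}))"
    proof (rule even_card_if_fixpoint_free_involution[where h = inverse])
      fix s assume s: "s \<in> ?P - {1}"
      then obtain x where x: "s = x^2" by auto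
      then have "inverse s = (inverse x)^2" by (simp add: power_inverse)
      then show "inverse s \<in> ?P - {1}" using s by auto
      show "inverse s \<noteq> s"
      proof
        assume "inverse s = s"
        then have "s^2 = 1" using s by (metis DiffD1 DiffD2 insertI1 power2_eq_square right_inverse)
        then have "s = 1 \<or> s = -1" by (simp add: power2_eq_1_iff)
        then show False using s x no_root by auto
      qed
    qed auto
    moreover have "card (?P - {1}) = card ?P - 1"
      using \<open>1 \<in> ?P\<close> by (rule card_Diff_singleton)
    moreover have "card ?P > 0"
      using \<open>1 \<in> ?P\<close> by (metis card_gt_0_iff empty_iff finite)
    ultimately show False by (cases "card ?P") auto
  qed
qed

definition vcons :: "'a \<Rightarrow> (nat \<Rightarrow> 'a) \<Rightarrow> nat \<Rightarrow> 'a" where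
  "vcons t w i = (case i of 0 \<Rightarrow> t | Suc j \<Rightarrow> w j)"

lemma vcons_0 [simp]: "vcons t w 0 = t"
  and vcons_Suc [simp]: "vcons t w (Suc j) = w j"
  by (simp_all add: vcons_def)

lemma vcons_head_tail: "vcons (u 0) (\<lambda>j. u (Suc j)) = u"
  by (auto simp: fun_eq_iff vcons_def split: nat.split)

lemma vcons_in_vecs_iff [simp]: "vcons t w \<in> vecs (Suc k) \<longleftrightarrow> w \<in> vecs k"
  by (auto simp: vecs_def vcons_def split: nat.split)

lemma vcons_eq_zero_iff [simp]: "vcons t w = (\<lambda>_. 0) \<longleftrightarrow> t = 0 \<and> w = (\<lambda>_. 0)"
  by (auto simp: fun_eq_iff vcons_def split: nat.split)

lemma sum_squares_vecs:
  fixes w :: "nat \<Rightarrow> 'a::comm_semiring_1"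
  assumes "w \<in> vecs m" "m \<le> k"
  shows "(\<Sum>i<k. w i ^ 2) = (\<Sum>i<m. w i ^ 2)"
  by (rule sum.mono_neutral_right) (use assms in \<open>auto simp: vecs_def\<close>)

lemma herm_self_eq_sum_squares:
  fixes u :: "nat \<Rightarrow> 'a::{field,finite}"
  shows "herm n u u = (\<Sum>i<n. u i ^ 2)"
  by (simp add: herm_def power_card_eq_self power2_eq_square)

lemma herm_self_vcons:
  fixes w :: "nat \<Rightarrow> 'a::{field,finite}"
  shows "herm (Suc k) (vcons t w) (vcons t w) = t ^ 2 + (\<Sum>i<k. w i ^ 2)"
  unfolding herm_self_eq_sum_squares sum.lessThan_Suc_shift by simp

lemma exists_vec_sum_squares_eq:
  fixes a :: "'a::{field,finite}"
  assumes "odd CARD('a)" "2 \<le> k"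
  shows "\<exists>w\<in>vecs k. (\<Sum>i<k. w i ^ 2) = a"
proof -
  obtain x y :: 'a where xy: "x^2 + y^2 = a"
    using exists_sum_two_squares_eq[OF assms(1)] by blast
  define w where "w = (\<lambda>i::nat. if i = 0 then x else if i = 1 then y else 0)"
  have "w \<in> vecs 2" by (simp add: vecs_def w_def)
  then have "(\<Sum>i<k. w i ^ 2) = (\<Sum>i<2. w i ^ 2)"
    using assms(2) by (rule sum_squares_vecs)
  also have "\<dots> = a" using xy by (simp add: w_def eval_nat_numeral)
  moreover have "w \<in> vecs k"
    using \<open>w \<in> vecs 2\<close> assms(2) by (simp add: vecs_def)
  ultimately show ?thesis by blast
qed

lemma exists_vec_sum_squares_eq_neg_square:
  fixes t :: "'a::{field,finite}"
  assumes "odd CARD('a)" "2 \<le> k \<or> (k = 1 \<and> CARD('a) mod 4 = 1)"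
  shows "\<exists>w\<in>vecs k. (\<Sum>i<k. w i ^ 2) = - (t ^ 2)"
  using assms(2)
proof
  assume "k = 1 \<and> CARD('a) mod 4 = 1"
  then obtain r :: 'a where "k = 1" "r^2 = -1"
    using minus_one_square_iff[OF assms(1)] by blast
  then show ?thesis
    by (intro bexI[of _ "\<lambda>i. if i = 0 then r * t else 0"])
      (auto simp: vecs_def power_mult_distrib)
qed (rule exists_vec_sum_squares_eq[OF assms(1)])

lemma exists_nonzero_isotropic_vec_iff:
  assumes q: "odd CARD('a::{field,finite})"
  shows "(\<exists>w\<in>vecs k. w \<noteq> (\<lambda>_. 0::'a) \<and> (\<Sum>i<k. w i ^ 2) = 0)
    \<longleftrightarrow> 3 \<le> k \<or> (k = 2 \<and> CARD('a) mod 4 = 1)"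
proof
  assume "\<exists>w\<in>vecs k. w \<noteq> (\<lambda>_. 0::'a) \<and> (\<Sum>i<k. w i ^ 2) = 0"
  then obtain w :: "nat \<Rightarrow> 'a" where w: "w \<in> vecs k" "w \<noteq> (\<lambda>_. 0)" "(\<Sum>i<k. w i ^ 2) = 0"
    by blast
  show "3 \<le> k \<or> (k = 2 \<and> CARD('a) mod 4 = 1)"
  proof (rule ccontr)
    assume "\<not> ?thesis"
    then have k: "k \<le> 2" "k = 2 \<Longrightarrow> CARD('a) mod 4 \<noteq> 1" by auto
    have "w \<in> vecs 2" using w(1) k(1) by (auto simp: vecs_def)
    have sum2: "w 0 ^ 2 + w 1 ^ 2 = 0"
      using sum_squares_vecs[OF w(1) k(1)] w(3) by (simp add: eval_nat_numeral)
    have "w 1 \<noteq> 0"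
    proof
      assume "w 1 = 0"
      with sum2 have "w 0 = 0" by simp
      with \<open>w 1 = 0\<close> \<open>w \<in> vecs 2\<close> w(2) show False
        by (auto simp: vecs_def fun_eq_iff) (metis One_nat_def less_2_cases not_le)
    qed
    then have "(w 0 / w 1) ^ 2 = -1"
      using sum2 by (simp add: power_divide field_simps eq_neg_iff_add_eq_0)
    then have "CARD('a) mod 4 = 1"
      using minus_one_square_iff[OF q] by metis
    moreover have "k = 2"
    proof (rule ccontr)
      assume "k \<noteq> 2"
      with k(1) have "k \<le> 1" by simp
      with w(1) have "w 1 = 0" by (simp add: vecs_def)
      with \<open>w 1 \<noteq> 0\<close> show False ..
    qed
    ultimately show False using k(2) by simp
  qed
next
  assume "3 \<le> k \<or> (k = 2 \<and> CARD('a) mod 4 = 1)"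
  then obtain m where k: "k = Suc m" "2 \<le> m \<or> (m = 1 \<and> CARD('a) mod 4 = 1)"
    by (cases k) auto
  then obtain w :: "nat \<Rightarrow> 'a" where "w \<in> vecs m" "(\<Sum>i<m. w i ^ 2) = - (1 ^ 2)"
    using exists_vec_sum_squares_eq_neg_square[OF q k(2)] by blast
  then show "\<exists>w\<in>vecs k. w \<noteq> (\<lambda>_. 0::'a) \<and> (\<Sum>i<k. w i ^ 2) = 0"
    using herm_self_vcons[of m 1 w] k(1)
    by (intro bexI[of _ "vcons 1 w"]) (auto simp: herm_self_eq_sum_squares)
qed

lemma exists_nonzero_isotropic_vec_head_zero_iff:
  assumes q: "odd CARD('a::{field,finite})"
  shows "(\<exists>u\<in>vecs n. u \<noteq> (\<lambda>_. 0::'a) \<and> u 0 = 0 \<and> herm n u u = 0)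
    \<longleftrightarrow> 4 \<le> n \<or> (n = 3 \<and> CARD('a) mod 4 = 1)"
proof (cases n)
  case 0
  then show ?thesis by (auto simp: vecs_def fun_eq_iff)
next
  case (Suc k)
  have "(\<exists>u\<in>vecs n. u \<noteq> (\<lambda>_. 0::'a) \<and> u 0 = 0 \<and> herm n u u = 0)
      \<longleftrightarrow> (\<exists>w\<in>vecs k. w \<noteq> (\<lambda>_. 0::'a) \<and> (\<Sum>i<k. w i ^ 2) = 0)"
  proof
    assume "\<exists>u\<in>vecs n. u \<noteq> (\<lambda>_. 0::'a) \<and> u 0 = 0 \<and> herm n u u = 0"
    then obtain u :: "nat \<Rightarrow> 'a" where u: "u \<in> vecs n" "u \<noteq> (\<lambda>_. 0)" "u 0 = 0" "herm n u u = 0"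
      by blast
    define w where "w = (\<lambda>j. u (Suc j))"
    have "u = vcons 0 w"
      using vcons_head_tail[of u] u(3) by (simp add: w_def)
    with u Suc herm_self_vcons[of k 0 w] show "\<exists>w\<in>vecs k. w \<noteq> (\<lambda>_. 0::'a) \<and> (\<Sum>i<k. w i ^ 2) = 0"
      by auto
  next
    assume "\<exists>w\<in>vecs k. w \<noteq> (\<lambda>_. 0::'a) \<and> (\<Sum>i<k. w i ^ 2) = 0"
    then obtain w :: "nat \<Rightarrow> 'a" where "w \<in> vecs k" "w \<noteq> (\<lambda>_. 0)" "(\<Sum>i<k. w i ^ 2) = 0"
      by blast
    then show "\<exists>u\<in>vecs n. u \<noteq> (\<lambda>_. 0::'a) \<and> u 0 = 0 \<and> herm n u u = 0"
      using herm_self_vcons[of k 0 w] Suc by (intro bexI[of _ "vcons 0 w"]) auto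
  qed
  also have "\<dots> \<longleftrightarrow> 4 \<le> n \<or> (n = 3 \<and> CARD('a) mod 4 = 1)"
    unfolding exists_nonzero_isotropic_vec_iff[OF q] using Suc by auto
  finally show ?thesis .
qed

lemma heads_of_isotropic_vecs:
  assumes q: "odd CARD('a::{field,finite})"
    and "2 \<le> n" "n = 2 \<Longrightarrow> CARD('a) mod 4 = 1"
  shows "(\<lambda>u. u 0) ` {u \<in> vecs n. herm n u u = (0::'a)} = UNIV"
proof -
  obtain m where n: "n = Suc m"
    using assms(2) by (cases n) auto
  with assms(2,3) have m: "2 \<le> m \<or> (m = 1 \<and> CARD('a) mod 4 = 1)"
    by auto
  have "t \<in> (\<lambda>u. u 0) ` {u \<in> vecs n. herm n u u = 0}" for t :: 'a
  proof -
    obtain w where "w \<in> vecs m" "(\<Sum>i<m. w i ^ 2) = - (t ^ 2)"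
      using exists_vec_sum_squares_eq_neg_square[OF q m] by blast
    then show ?thesis
      using herm_self_vcons[of m t w] n by (intro image_eqI[of _ _ "vcons t w"]) auto
  qed
  then show ?thesis by blast
qed

lemma herm_mat_vec_eq_sum_diag:
  fixes M :: "nat \<Rightarrow> nat \<Rightarrow> 'a::{field,finite}"
  assumes two: "(2::'a) \<noteq> 0"
    and skew: "\<And>i j. i < n \<Longrightarrow> j < n \<Longrightarrow> i \<noteq> j \<Longrightarrow> M i j + M j i = 0"
  shows "herm n u (mat_vec n M u) = (\<Sum>i<n. M i i * u i ^ 2)"
proof -
  let ?S = "\<Sum>i<n. \<Sum>j<n. M i j * u i * u j"
  let ?S' = "\<Sum>i<n. \<Sum>j<n. M j i * u i * u j"
  have swap: "?S = ?S'"
    by (subst sum.swap) (simp add: mult_ac)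
  have "2 * ?S = ?S + ?S'"
    using swap by (simp only: mult_2)
  also have "\<dots> = (\<Sum>i<n. \<Sum>j<n. (M i j + M j i) * u i * u j)"
    by (simp only: sum.distrib[symmetric] distrib_right)
  also have "\<dots> = (\<Sum>i<n. \<Sum>j<n. if j = i then 2 * (M i i * u i ^ 2) else 0)"
    using skew by (intro sum.cong refl) (auto simp: power2_eq_square)
  also have "\<dots> = 2 * (\<Sum>i<n. M i i * u i ^ 2)"
    by (simp add: sum_distrib_left)
  finally have "?S = (\<Sum>i<n. M i i * u i ^ 2)"
    using two by simp
  moreover have "herm n u (mat_vec n M u) = ?S"
    unfolding herm_def mat_vec_def by (simp add: power_card_eq_self sum_distrib_left mult_ac)
  ultimately show ?thesis by simp
qed

lemma herm_mat_vec_eq: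
  fixes M :: "nat \<Rightarrow> nat \<Rightarrow> 'a::{field,finite}"
  assumes two: "(2::'a) \<noteq> 0" and "0 < n"
    and skew: "\<And>i j. i < n \<Longrightarrow> j < n \<Longrightarrow> i \<noteq> j \<Longrightarrow> M i j + M j i = 0"
    and diag_rest: "\<And>i. 2 \<le> i \<Longrightarrow> i < n \<Longrightarrow> M i i = M 1 1"
  shows "herm n u (mat_vec n M u) = (M 0 0 - M 1 1) * u 0 ^ 2 + M 1 1 * herm n u u"
proof -
  have "M i i * u i ^ 2 = M 1 1 * u i ^ 2 + (if i = 0 then (M 0 0 - M 1 1) * u 0 ^ 2 else 0)"
    if "i < n" for i
    using diag_rest[of i] that by (cases "i = 0 \<or> i = 1") (auto simp: algebra_simps)
  then have "(\<Sum>i<n. M i i * u i ^ 2)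
      = (\<Sum>i<n. M 1 1 * u i ^ 2) + (\<Sum>i<n. if i = 0 then (M 0 0 - M 1 1) * u 0 ^ 2 else 0)"
    by (simp add: sum.distrib)
  then show ?thesis
    using \<open>0 < n\<close>
    by (simp add: herm_mat_vec_eq_sum_diag[OF two skew] herm_self_eq_sum_squares sum_distrib_left)
qed

lemma Num0_eq_image:
  fixes M :: "nat \<Rightarrow> nat \<Rightarrow> 'a::{field,finite}"
  assumes "(2::'a) \<noteq> 0" "0 < n"
    and "\<And>i j. i < n \<Longrightarrow> j < n \<Longrightarrow> i \<noteq> j \<Longrightarrow> M i j + M j i = 0"
    and "\<And>i. 2 \<le> i \<Longrightarrow> i < n \<Longrightarrow> M i i = M 1 1"
  shows "Num0 n M = (\<lambda>u. (M 0 0 - M 1 1) * u 0 ^ 2) ` {u \<in> vecs n. herm n u u = 0}"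
    and "Num0' n M = (\<lambda>u. (M 0 0 - M 1 1) * u 0 ^ 2) ` {u \<in> vecs n. u \<noteq> (\<lambda>_. 0) \<and> herm n u u = 0}"
proof -
  have value_eq: "herm n u (mat_vec n M u) = (M 0 0 - M 1 1) * u 0 ^ 2" if "herm n u u = 0" for u
    using herm_mat_vec_eq[where M = M and n = n, OF assms] that by simp
  have "Num0 n M = (\<lambda>u. herm n u (mat_vec n M u)) ` {u \<in> vecs n. herm n u u = 0}"
    unfolding Num0_def by blast
  also have "\<dots> = (\<lambda>u. (M 0 0 - M 1 1) * u 0 ^ 2) ` {u \<in> vecs n. herm n u u = 0}"
    using value_eq by (intro image_cong) auto
  finally show "Num0 n M = (\<lambda>u. (M 0 0 - M 1 1) * u 0 ^ 2) ` {u \<in> vecs n. herm n u u = 0}" .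
  have "Num0' n M = (\<lambda>u. herm n u (mat_vec n M u)) ` {u \<in> vecs n. u \<noteq> (\<lambda>_. 0) \<and> herm n u u = 0}"
    unfolding Num0'_def by blast
  also have "\<dots> = (\<lambda>u. (M 0 0 - M 1 1) * u 0 ^ 2) ` {u \<in> vecs n. u \<noteq> (\<lambda>_. 0) \<and> herm n u u = 0}"
    using value_eq by (intro image_cong) auto
  finally show "Num0' n M = (\<lambda>u. (M 0 0 - M 1 1) * u 0 ^ 2) ` {u \<in> vecs n. u \<noteq> (\<lambda>_. 0) \<and> herm n u u = 0}" .
qed

lemma Num0_eq_range_scaled_squares:
  fixes M :: "nat \<Rightarrow> nat \<Rightarrow> 'a::{field,finite}"
  assumes q: "odd CARD('a)" and n: "2 \<le> n" "n = 2 \<Longrightarrow> CARD('a) mod 4 = 1"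
    and skew: "\<And>i j. i < n \<Longrightarrow> j < n \<Longrightarrow> i \<noteq> j \<Longrightarrow> M i j + M j i = 0"
    and diag_rest: "\<And>i. 2 \<le> i \<Longrightarrow> i < n \<Longrightarrow> M i i = M 1 1"
  shows "Num0 n M = range (\<lambda>t. (M 0 0 - M 1 1) * t ^ 2)"
proof -
  have "Num0 n M = (\<lambda>t. (M 0 0 - M 1 1) * t ^ 2) ` ((\<lambda>u. u 0) ` {u \<in> vecs n. herm n u u = 0})"
    using n(1) by (simp add: Num0_eq_image[where M = M and n = n,
        OF two_neq_zero_if_odd_card[OF q] _ skew diag_rest] image_image)
  then show ?thesis
    using heads_of_isotropic_vecs[OF q n] by simp
qed

lemma zero_in_Num0'_iff:
  fixes M :: "nat \<Rightarrow> nat \<Rightarrow> 'a::{field,finite}"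
  assumes q: "odd CARD('a)" and "0 < n"
    and skew: "\<And>i j. i < n \<Longrightarrow> j < n \<Longrightarrow> i \<noteq> j \<Longrightarrow> M i j + M j i = 0"
    and diag12: "M 0 0 \<noteq> M 1 1"
    and diag_rest: "\<And>i. 2 \<le> i \<Longrightarrow> i < n \<Longrightarrow> M i i = M 1 1"
  shows "0 \<in> Num0' n M \<longleftrightarrow> 4 \<le> n \<or> (n = 3 \<and> CARD('a) mod 4 = 1)"
proof -
  have "0 \<in> Num0' n M \<longleftrightarrow> (\<exists>u\<in>vecs n. u \<noteq> (\<lambda>_. 0::'a) \<and> u 0 = 0 \<and> herm n u u = 0)"
    using diag12 by (auto simp: image_iff Num0_eq_image[where M = M and n = n,
        OF two_neq_zero_if_odd_card[OF q] \<open>0 < n\<close> skew diag_rest])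
  then show ?thesis
    unfolding exists_nonzero_isotropic_vec_head_zero_iff[OF q] .
qed

lemma card_range_scaled_squares:
  fixes c :: "'a::{field,finite}"
  assumes "odd CARD('a)" "c \<noteq> 0"
  shows "card (range (\<lambda>t. c * t ^ 2)) = (CARD('a) + 1) div 2"
proof -
  have "card (range (\<lambda>t. c * t ^ 2)) = card ((\<lambda>s. c * s) ` range (\<lambda>t::'a. t ^ 2))"
    by (simp add: image_image)
  also have "\<dots> = card (range (\<lambda>t::'a. t ^ 2))"
    using assms(2) by (intro card_image) (simp add: inj_on_def)
  finally show ?thesis
    using card_squares[OF assms(1)] by simp
qed

lemma mem_range_scaled_squares_iff:
  fixes c :: "'a::field"
  assumes "c \<noteq> 0"
  shows "a \<in> range (\<lambda>t. c * t ^ 2) \<longleftrightarrow> (\<exists>y. a / c = y ^ 2)"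
  using assms by (auto simp: image_iff divide_eq_eq mult.commute)

theorem proposition9:
  fixes M :: "nat \<Rightarrow> nat \<Rightarrow> 'a::{field,finite}" and n :: nat
  assumes q_odd: "odd CARD('a)"
    and n2: "n \<ge> 2"
    and n2_q: "n = 2 \<Longrightarrow> CARD('a) mod 4 = 1"
    and skew: "\<And>i j. i < n \<Longrightarrow> j < n \<Longrightarrow> i \<noteq> j \<Longrightarrow> M i j + M j i = 0"
    and diag12: "M 0 0 \<noteq> M 1 1"
    and diag_rest: "\<And>i. 2 \<le> i \<Longrightarrow> i < n \<Longrightarrow> M i i = M 1 1"
  shows "card (Num0 n M) = (CARD('a) + 1) div 2
    \<and> Num0 n M - {0} = {a. a \<noteq> 0 \<and> (\<exists>y. - a / (M 1 1 - M 0 0) = y ^ 2)}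
    \<and> (0 \<in> Num0' n M \<longleftrightarrow> (n \<ge> 4 \<or> (n = 3 \<and> CARD('a) mod 4 = 1)))"
proof -
  have c: "M 0 0 - M 1 1 \<noteq> 0" using diag12 by simp
  have Num0: "Num0 n M = range (\<lambda>t. (M 0 0 - M 1 1) * t ^ 2)"
    by (rule Num0_eq_range_scaled_squares[where M = M, OF q_odd n2 n2_q skew diag_rest])
  have "- a / (M 1 1 - M 0 0) = a / (M 0 0 - M 1 1)" for a :: 'a
    by (metis minus_diff_eq minus_divide_divide)
  then have "Num0 n M - {0} = {a. a \<noteq> 0 \<and> (\<exists>y. - a / (M 1 1 - M 0 0) = y ^ 2)}"
    unfolding Num0 using mem_range_scaled_squares_iff[OF c] by auto
  moreover have "0 < n" using n2 by simp
  ultimately show ?thesis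
    using card_range_scaled_squares[OF q_odd c] Num0
      zero_in_Num0'_iff[where M = M, OF q_odd \<open>0 < n\<close> skew diag12 diag_rest] by simp
qed

end
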